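(* Let $n,m\in\mathbb{N}$, $k\in\mathbb{N}$, $p\in\mathbb{N}\cup\{0\}$, and let $F: V(L_n)\to V(D_m)$ satisfy $$4^{p}d_{L_n}(u,v)\le d_{D_m}(Fu,Fv)\le 4^{k}\cdot 4^{p}d_{L_n}(u,v)\quad\text{for all } u,v\in V(L_n).$$ Let $h\in\{1,\dots,n\}$ satisfy $\frac{4^h}{3}-1-4^k\ge 4^{h-1}$. Let $C_{4^h}$ be an isometric cycle of length $4^h$ in $L_n$, and let $FC_{4^h}$ be the closed walk in $D_m$ obtained by joining, for each edge $uv$ of $C_{4^h}$, the points $Fu$ and $Fv$ by a chosen shortest path in $D_m$. Then the subgraph of $D_m$ spanned by $FC_{4^h}$ contains a cycle whose length is between $4^{p+h-1}$ and $4^{p+h+k}$.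
   Context: All graphs are unweighted (each edge has length $1$) and carry the shortest-path metric. Diamond graphs: $D_0$ is a single edge; $D_m$ is obtained from $D_{m-1}$ by replacing every edge $uv$ by a quadrilateral $u,a,v,b$ with edges $ua,av,vb,bu$. Laakso graphs: $L_0$ is a single edge; $L_1$ is the graph with vertices $x_1,\dots,x_6$ and edges $x_1x_2,x_2x_3,x_2x_4,x_3x_5,x_4x_5,x_5x_6$; $L_n$ is obtained from $L_{n-1}$ by replacing each edge $uv$ by a copy of $L_1$ with $u,v$ identified with $x_1,x_6$. A cycle in $L_n$ is isometric if the distance in $L_n$ between any two of its vertices equals their distance along the cycle. *)

theory Defs
  imports Main Complex_Main
begin

text \<open>A vertex is one of the two original endpoints, or the i-th new vertex
  inserted when the (oriented) edge (u,v) of the previous level is replaced.\<close>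
datatype vert = VS | VT | Sub vert vert nat

text \<open>Local labels of a gadget: source, target, inner vertices.\<close>
datatype lab = Src | Tgt | Inn nat

fun inst :: "vert \<Rightarrow> vert \<Rightarrow> lab \<Rightarrow> vert" where
  "inst u v Src = u"
| "inst u v Tgt = v"
| "inst u v (Inn i) = Sub u v i"

text \<open>Replace every (oriented) edge (u,v) of E by a copy of the gadget G,
  identifying Src with u and Tgt with v.\<close>
definition refine :: "(lab \<times> lab) set \<Rightarrow> (vert \<times> vert) set \<Rightarrow> (vert \<times> vert) set" where
  "refine G E = (\<Union>(u,v)\<in>E. (\<lambda>(a,b). (inst u v a, inst u v b)) ` G)"

fun iter_graph :: "(lab \<times> lab) set \<Rightarrow> nat \<Rightarrow> (vert \<times> vert) set" where
  "iter_graph G 0 = {(VS, VT)}"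
| "iter_graph G (Suc n) = refine G (iter_graph G n)"

text \<open>Quadrilateral u,a,v,b with edges ua, av, vb, bu.\<close>
definition diamond_gadget :: "(lab \<times> lab) set" where
  "diamond_gadget = {(Src, Inn 0), (Inn 0, Tgt), (Src, Inn 1), (Inn 1, Tgt)}"

text \<open>L_1: x1 = Src, x2 = Inn 0, x3 = Inn 1, x4 = Inn 2, x5 = Inn 3, x6 = Tgt.\<close>
definition laakso_gadget :: "(lab \<times> lab) set" where
  "laakso_gadget = {(Src, Inn 0), (Inn 0, Inn 1), (Inn 0, Inn 2),
                    (Inn 1, Inn 3), (Inn 2, Inn 3), (Inn 3, Tgt)}"

definition diamond :: "nat \<Rightarrow> (vert \<times> vert) set" where
  "diamond m = iter_graph diamond_gadget m"

definition laakso :: "nat \<Rightarrow> (vert \<times> vert) set" where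
  "laakso n = iter_graph laakso_gadget n"

definition verts :: "('a \<times> 'a) set \<Rightarrow> 'a set" where
  "verts E = Field E"

definition adj :: "('a \<times> 'a) set \<Rightarrow> 'a \<Rightarrow> 'a \<Rightarrow> bool" where
  "adj E x y \<longleftrightarrow> (x, y) \<in> E \<or> (y, x) \<in> E"

definition walk :: "('a \<times> 'a) set \<Rightarrow> 'a list \<Rightarrow> bool" where
  "walk E xs \<longleftrightarrow> xs \<noteq> [] \<and> (\<forall>i. Suc i < length xs \<longrightarrow> adj E (xs ! i) (xs ! Suc i))"

definition gdist :: "('a \<times> 'a) set \<Rightarrow> 'a \<Rightarrow> 'a \<Rightarrow> nat" where
  "gdist E x y = (LEAST n. \<exists>xs. walk E xs \<and> hd xs = x \<and> last xs = y \<and> length xs = Suc n)"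

text \<open>A cycle, given by its list of (distinct) vertices in cyclic order;
  its length is the number of vertices (= number of edges).\<close>
definition cycle_in :: "('a \<times> 'a) set \<Rightarrow> 'a list \<Rightarrow> bool" where
  "cycle_in E cs \<longleftrightarrow> length cs \<ge> 3 \<and> distinct cs \<and>
     (\<forall>i < length cs. adj E (cs ! i) (cs ! ((i + 1) mod length cs)))"

definition cyc_dist :: "nat \<Rightarrow> nat \<Rightarrow> nat \<Rightarrow> nat" where
  "cyc_dist l i j = (let d = (if i \<le> j then j - i else i - j) in min d (l - d))"

definition isometric_cycle :: "('a \<times> 'a) set \<Rightarrow> 'a list \<Rightarrow> bool" where
  "isometric_cycle E cs \<longleftrightarrow> cycle_in E cs \<and>
     (\<forall>i < length cs. \<forall>j < length cs. gdist E (cs ! i) (cs ! j) = cyc_dist (length cs) i j)"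

definition walks_edges :: "nat \<Rightarrow> (nat \<Rightarrow> 'a list) \<Rightarrow> ('a \<times> 'a) set" where
  "walks_edges l P = {(P i ! j, P i ! Suc j) | i j. i < l \<and> Suc j < length (P i)}"

end

theory Submission
  imports Defs
begin

text \<open>Write \<open>x i = F (c\<^sub>i)\<close> for the vertices \<open>c\<^sub>i\<close> of the isometric cycle, \<open>N = 4\<^sup>h\<close>,
  \<open>D = 4\<^sup>p\<close> and \<open>K = 4\<^sup>k\<close>. The points \<open>x i\<close> are \<open>D\<close>-separated according to their cyclic
  distance, and consecutive ones are joined by the chosen geodesics \<open>P i\<close> of at most \<open>K D\<close> edges.
  Call the last \<open>2K + 1\<close> geodesics the back arcs and let \<open>Q\<close> be a simple path from \<open>x 0\<close> to
  the start of the back arcs inside the other geodesics. Every vertex of \<open>Q\<close> lies within \<open>K D\<close>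
  of some \<open>x (u t)\<close>, and separation forces \<open>u\<close> to move in steps of at most \<open>2K + 1\<close>, so \<open>Q\<close>
  passes a vertex near the point of the cycle opposite the back arcs. That vertex is far from
  every vertex of the back arcs, so the excursion of \<open>Q\<close> away from the back arcs around it is
  long, and closing it up through the back arcs gives a long cycle. Conversely every cycle in the
  union of the geodesics has at most as many vertices as the geodesics have edges, \<open>N K D\<close>.\<close>

section \<open>Walks and distances\<close>

lemma adj_commute: "adj E x y \<longleftrightarrow> adj E y x"
  by (auto simp: adj_def)

lemma walk_iff_successively: "walk E xs \<longleftrightarrow> xs \<noteq> [] \<and> successively (adj E) xs"
  by (simp add: walk_def successively_conv_nth)

lemma walk_rev: "walk E xs \<Longrightarrow> walk E (rev xs)"
  unfolding walk_iff_successively by (auto simp: adj_commute elim: successively_mono)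

lemma walk_append_tl: "walk E xs \<Longrightarrow> walk E ys \<Longrightarrow> last xs = hd ys \<Longrightarrow> walk E (xs @ tl ys)"
  unfolding walk_iff_successively
  by (cases ys; cases "tl ys") (auto simp: successively_append_iff)

lemma walk_adj_mono: "(\<And>y z. adj E y z \<Longrightarrow> adj E' y z) \<Longrightarrow> walk E xs \<Longrightarrow> walk E' xs"
  unfolding walk_def by blast

lemma walk_mono: "E \<subseteq> E' \<Longrightarrow> walk E xs \<Longrightarrow> walk E' xs"
  unfolding walk_def adj_def by blast

lemma walk_segment:
  assumes "walk E xs" "i \<le> j" "j < length xs"
  defines "ys \<equiv> take (Suc (j - i)) (drop i xs)"
  shows "walk E ys" "hd ys = xs ! i" "last ys = xs ! j" "length ys = Suc (j - i)"
    "\<And>r. r < length ys \<Longrightarrow> ys ! r = xs ! (i + r)"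
proof -
  have len: "length ys = Suc (j - i)" using assms by (simp add: ys_def)
  show "walk E ys" using assms by (auto simp: walk_def ys_def)
  show "hd ys = xs ! i" using assms by (simp add: ys_def hd_drop_conv_nth)
  show nth: "\<And>r. r < length ys \<Longrightarrow> ys ! r = xs ! (i + r)" using len by (simp add: ys_def)
  show "last ys = xs ! j"
    using len nth[of "j - i"] assms(2) by (metis diff_Suc_1 last_conv_nth le_add_diff_inverse lessI list.size(3) nat.distinct(1))
  show "length ys = Suc (j - i)" by (fact len)
qed

lemma walk_set_subset_Field:
  assumes "walk E xs" "2 \<le> length xs"
  shows "set xs \<subseteq> Field E"
proof
  fix y assume "y \<in> set xs"
  then obtain t where t: "t < length xs" "xs ! t = y" by (auto simp: in_set_conv_nth)
  have "adj E (xs ! t) (xs ! Suc t) \<or> adj E (xs ! (t - 1)) (xs ! t)"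
  proof (cases "Suc t < length xs")
    case True then show ?thesis using assms(1) unfolding walk_def by blast
  next
    case False then show ?thesis using assms t unfolding walk_def by (cases t) auto
  qed
  then show "y \<in> Field E"
    using t by (auto simp: adj_def Field_def)
qed

definition reach_le :: "('a \<times> 'a) set \<Rightarrow> 'a \<Rightarrow> 'a \<Rightarrow> nat \<Rightarrow> bool" where
  "reach_le E x y n \<longleftrightarrow> (\<exists>xs. walk E xs \<and> hd xs = x \<and> last xs = y \<and> length xs \<le> Suc n)"

lemma reach_le_refl: "reach_le E x x 0"
  unfolding reach_le_def by (rule exI[of _ "[x]"]) (simp add: walk_def)

lemma reach_le_sym: "reach_le E x y n \<Longrightarrow> reach_le E y x n"
  unfolding reach_le_def by (metis hd_rev last_rev length_rev walk_rev walk_def)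

lemma reach_le_trans:
  assumes "reach_le E x y a" "reach_le E y z b"
  shows "reach_le E x z (a + b)"
proof -
  obtain xs ys where xs: "walk E xs" "hd xs = x" "last xs = y" "length xs \<le> Suc a"
    and ys: "walk E ys" "hd ys = y" "last ys = z" "length ys \<le> Suc b"
    using assms unfolding reach_le_def by blast
  have "xs \<noteq> []" "ys \<noteq> []" using xs ys by (auto simp: walk_def)
  then have "walk E (xs @ tl ys) \<and> hd (xs @ tl ys) = x \<and> last (xs @ tl ys) = z \<and>
      length (xs @ tl ys) \<le> Suc (a + b)"
    using xs ys walk_append_tl[OF xs(1) ys(1)] by (cases ys; cases "tl ys") auto
  then show ?thesis unfolding reach_le_def by blast
qed

lemma reach_le_mono: "reach_le E x y a \<Longrightarrow> a \<le> b \<Longrightarrow> reach_le E x y b"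
  unfolding reach_le_def by fastforce

lemma reach_le_adj_mono: "(\<And>y z. adj E y z \<Longrightarrow> adj E' y z) \<Longrightarrow> reach_le E x y n \<Longrightarrow> reach_le E' x y n"
  unfolding reach_le_def using walk_adj_mono by blast

lemma reach_le_segment: "walk E xs \<Longrightarrow> i \<le> j \<Longrightarrow> j < length xs \<Longrightarrow> reach_le E (xs ! i) (xs ! j) (j - i)"
  unfolding reach_le_def using walk_segment by (metis order_refl)

lemma gdist_le_walk: "walk E xs \<Longrightarrow> gdist E (hd xs) (last xs) \<le> length xs - 1"
  unfolding gdist_def by (rule Least_le) (rule exI[of _ xs], auto simp: walk_def)

lemma gdist_le_if_reach_le: "reach_le E x y n \<Longrightarrow> gdist E x y \<le> n"
  unfolding reach_le_def using gdist_le_walk by fastforce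

lemma shortest_walk_exists:
  assumes "walk E xs"
  obtains ys where "walk E ys" "hd ys = hd xs" "last ys = last xs"
    "length ys = Suc (gdist E (hd xs) (last xs))"
proof -
  have "\<exists>n ys. walk E ys \<and> hd ys = hd xs \<and> last ys = last xs \<and> length ys = Suc n"
    using assms by (intro exI[of _ "length xs - 1"] exI[of _ xs]) (auto simp: walk_def)
  from LeastI_ex[OF this] show ?thesis using that unfolding gdist_def by blast
qed

text \<open>A repeated vertex could be short-cut, giving a walk shorter than the distance.\<close>
lemma shortest_walk_distinct:
  assumes w: "walk E xs" and len: "length xs = Suc (gdist E (hd xs) (last xs))"
  shows "distinct xs"
proof (rule ccontr)
  assume "\<not> distinct xs"
  then obtain i j where ij: "i < j" "j < length xs" "xs ! i = xs ! j"
    by (metis distinct_conv_nth linorder_neqE_nat)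
  define ys where "ys = take (Suc i) xs @ tl (drop j xs)"
  have last_take: "last (take (Suc i) xs) = xs ! i"
    using ij(1,2) by (subst last_conv_nth) auto
  then have "last (take (Suc i) xs) = hd (drop j xs)"
    using ij by (simp add: hd_drop_conv_nth)
  then have walk_ys: "walk E ys"
    unfolding ys_def using ij w by (intro walk_append_tl) (auto simp: walk_def)
  have "hd ys = hd xs" unfolding ys_def using ij by (cases xs) auto
  moreover have "last ys = last xs"
  proof (cases "Suc j = length xs")
    case True
    then have "last xs = xs ! j" by (metis diff_Suc_1 last_conv_nth list.size(3) nat.distinct(1))
    then show ?thesis using True ij last_take by (simp add: ys_def tl_drop)
  next
    case False
    then have "tl xs \<noteq> []" using ij by (cases xs) auto
    then show ?thesis using False ij by (simp add: ys_def tl_drop last_drop last_tl)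
  qed
  ultimately have "length xs - 1 \<le> length ys - 1"
    using gdist_le_walk[OF walk_ys] len by simp
  moreover have "length ys < length xs" unfolding ys_def using ij by auto
  moreover have "ys \<noteq> []" using walk_ys by (simp add: walk_def)
  ultimately show False by (cases ys) auto
qed

lemma reach_le_distinct_walk:
  assumes "reach_le E x y n"
  obtains ys where "walk E ys" "hd ys = x" "last ys = y" "distinct ys"
  using assms unfolding reach_le_def by (metis shortest_walk_exists shortest_walk_distinct)

section \<open>Cycles in unions of walks\<close>

lemma cycle_in_closed_walk:
  assumes "walk E (cs @ [hd cs])" "distinct cs" "3 \<le> length cs"
  shows "cycle_in E cs"
  unfolding cycle_in_def
proof (intro conjI allI impI assms(2,3))
  fix i assume i: "i < length cs"
  have "adj E ((cs @ [hd cs]) ! i) ((cs @ [hd cs]) ! Suc i)"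
    using assms(1) i unfolding walk_def by simp
  moreover have "hd cs = cs ! 0" using i by (intro hd_conv_nth) auto
  ultimately show "adj E (cs ! i) (cs ! ((i + 1) mod length cs))"
    using i by (cases "Suc i = length cs") (auto simp: nth_append)
qed

lemma cycle_in_join:
  assumes "walk E A" "walk E S" "distinct A" "distinct S" "3 \<le> length A" "2 \<le> length S"
    and "last A = hd S" "last S = hd A"
    and "\<forall>y \<in> set A. y \<in> set S \<longrightarrow> y = hd A \<or> y = last A"
  shows "cycle_in E (A @ butlast (tl S))"
proof (rule cycle_in_closed_walk)
  have S: "S = hd S # tl S" "tl S = butlast (tl S) @ [last S]"
    using assms(6) by (cases S; auto)+
  have "A \<noteq> []" using assms(5) by auto
  then have "(A @ butlast (tl S)) @ [hd (A @ butlast (tl S))] = A @ tl S"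
    using S(2) assms(8) by simp
  then show "walk E ((A @ butlast (tl S)) @ [hd (A @ butlast (tl S))])"
    using walk_append_tl[OF assms(1,2,7)] by simp
  have "distinct (hd S # butlast (tl S) @ [last S])"
    using assms(4) S by metis
  moreover have "set (butlast (tl S)) \<subseteq> set S"
    by (metis S(1) in_set_butlastD set_subset_Cons subset_code(1))
  ultimately have "set A \<inter> set (butlast (tl S)) = {}"
    using assms(7-9) by fastforce
  then show "distinct (A @ butlast (tl S))"
    using assms(3) \<open>distinct (hd S # butlast (tl S) @ [last S])\<close> by simp
  show "3 \<le> length (A @ butlast (tl S))" using assms(5) by simp
qed

lemma cycle_in_set_subset_Field: "cycle_in E cs \<Longrightarrow> set cs \<subseteq> Field E"
  unfolding cycle_in_def adj_def Field_def by (auto simp: in_set_conv_nth) blast+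

lemma cyc_dist_Suc_mod: "2 \<le> N \<Longrightarrow> i < N \<Longrightarrow> cyc_dist N i (Suc i mod N) = 1"
  by (cases "Suc i = N") (auto simp: cyc_dist_def Let_def)

lemma isometric_cycle_nth_verts: "isometric_cycle G cs \<Longrightarrow> i < length cs \<Longrightarrow> cs ! i \<in> verts G"
  unfolding isometric_cycle_def verts_def using cycle_in_set_subset_Field nth_mem by blast

lemma isometric_cycle_gdist_Suc:
  assumes "isometric_cycle G cs" "i < length cs"
  shows "gdist G (cs ! i) (cs ! (Suc i mod length cs)) = 1"
proof -
  have "3 \<le> length cs" using assms(1) by (simp add: isometric_cycle_def cycle_in_def)
  moreover have "Suc i mod length cs < length cs" using assms(2) by (intro mod_less_divisor) linarith
  ultimately show ?thesis
    using assms cyc_dist_Suc_mod[of "length cs" i] unfolding isometric_cycle_def by simp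
qed

definition walks_edges_on :: "nat set \<Rightarrow> (nat \<Rightarrow> 'a list) \<Rightarrow> ('a \<times> 'a) set" where
  "walks_edges_on I P = {(P i ! j, P i ! Suc j) | i j. i \<in> I \<and> Suc j < length (P i)}"

lemma walks_edges_eq_on: "walks_edges l P = walks_edges_on {..<l} P"
  unfolding walks_edges_def walks_edges_on_def by auto

lemma walks_edges_on_mono: "I \<subseteq> J \<Longrightarrow> walks_edges_on I P \<subseteq> walks_edges_on J P"
  unfolding walks_edges_on_def by blast

lemma walk_walks_edges_on: "i \<in> I \<Longrightarrow> P i \<noteq> [] \<Longrightarrow> walk (walks_edges_on I P) (P i)"
  unfolding walk_def adj_def walks_edges_on_def by blast

lemma Field_walks_edges_on: "Field (walks_edges_on I P) \<subseteq> (\<Union>i\<in>I. set (P i))"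
  unfolding walks_edges_on_def Field_def by (auto intro!: nth_mem)

lemma adj_walks_edges_on:
  assumes "\<And>i. i \<in> I \<Longrightarrow> walk E (P i)" "adj (walks_edges_on I P) y z"
  shows "adj E y z"
proof -
  obtain i j where "i \<in> I" "Suc j < length (P i)"
    "(y, z) = (P i ! j, P i ! Suc j) \<or> (z, y) = (P i ! j, P i ! Suc j)"
    using assms(2) unfolding adj_def walks_edges_on_def by blast
  with assms(1) show ?thesis unfolding walk_def by (metis adj_commute prod.inject)
qed

text \<open>Closing up makes every start vertex the end vertex of the previous walk, so the tails of
  the walks already contain all vertices.\<close>
lemma Field_walks_edges_subset:
  assumes "\<And>i. i < l \<Longrightarrow> 2 \<le> length (P i)"
    and "\<And>i. i < l \<Longrightarrow> last (P i) = hd (P (Suc i mod l))"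
  shows "Field (walks_edges l P) \<subseteq> (\<Union>i<l. set (tl (P i)))"
proof
  fix y assume "y \<in> Field (walks_edges l P)"
  then obtain i j where ij: "i < l" "Suc j < length (P i)" "y = P i ! j \<or> y = P i ! Suc j"
    unfolding walks_edges_def Field_def by blast
  show "y \<in> (\<Union>i<l. set (tl (P i)))"
  proof (cases "y = P i ! 0")
    case True
    define i' where "i' = (if i = 0 then l - 1 else i - 1)"
    have i': "i' < l" "Suc i' mod l = i" using ij(1) by (auto simp: i'_def)
    have "tl (P i') \<noteq> []" using assms(1)[OF i'(1)] by (cases "P i'") auto
    then have "last (P i') \<in> set (tl (P i'))" by (metis last_in_set last_tl)
    moreover have "hd (P i) = P i ! 0" using ij(2) by (intro hd_conv_nth) auto
    ultimately have "y \<in> set (tl (P i'))" using assms(2)[OF i'(1)] i' True by simp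
    then show ?thesis using i'(1) by blast
  next
    case False
    then obtain j' where j': "0 < j'" "j' < length (P i)" "y = P i ! j'"
      using ij by (metis Suc_lessD gr0I zero_less_Suc)
    then have "y = tl (P i) ! (j' - 1)" "j' - 1 < length (tl (P i))" by (simp_all add: nth_tl)
    then show ?thesis using ij(1) by (metis UN_I lessThan_iff nth_mem)
  qed
qed

lemma cycle_in_walks_edges_length_le:
  assumes "cycle_in (walks_edges l P) ys"
    and "\<And>i. i < l \<Longrightarrow> 2 \<le> length (P i)"
    and "\<And>i. i < l \<Longrightarrow> last (P i) = hd (P (Suc i mod l))"
  shows "length ys \<le> (\<Sum>i<l. length (P i) - 1)"
proof -
  have "set ys \<subseteq> (\<Union>i<l. set (tl (P i)))"
    using cycle_in_set_subset_Field[OF assms(1)] Field_walks_edges_subset[of l P] assms(2,3) by blast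
  then have "card (set ys) \<le> card (\<Union>i<l. set (tl (P i)))" by (intro card_mono) auto
  also have "\<dots> \<le> (\<Sum>i<l. card (set (tl (P i))))" by (rule card_UN_le) simp
  also have "\<dots> \<le> (\<Sum>i<l. length (P i) - 1)" by (intro sum_mono) (metis card_length length_tl)
  finally show ?thesis using assms(1) by (simp add: cycle_in_def distinct_card)
qed

lemma nat_crossing:
  fixes u :: "nat \<Rightarrow> nat"
  assumes "u 0 < M" "M \<le> u l" "\<And>t. t < l \<Longrightarrow> u (Suc t) \<le> u t + Suc c"
  obtains t where "t \<le> l" "M \<le> u t" "u t \<le> M + c"
proof -
  define t where "t = (LEAST t. M \<le> u t)"
  have t: "M \<le> u t" "t \<le> l"
    using LeastI[of "\<lambda>t. M \<le> u t" l] Least_le[of "\<lambda>t. M \<le> u t" l] assms(2) by (simp_all add: t_def)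
  have "t \<noteq> 0" using assms(1) t(1) by (metis not_le)
  then have "u (t - 1) < M" using not_less_Least[of "t - 1" "\<lambda>t. M \<le> u t"] by (simp add: t_def)
  moreover have "u t \<le> u (t - 1) + Suc c" using assms(3)[of "t - 1"] \<open>t \<noteq> 0\<close> t(2) by simp
  ultimately have "u t \<le> M + c" by linarith
  with t show thesis using that by blast
qed

lemma nat_excursion:
  fixes R :: "nat \<Rightarrow> bool"
  assumes "R 0" "R l" "\<not> R t" "t \<le> l"
  obtains i j where "i < t" "t < j" "j \<le> l" "R i" "R j" "\<And>s. i < s \<Longrightarrow> s < j \<Longrightarrow> \<not> R s"
proof -
  define i where "i = (GREATEST s. s \<le> t \<and> R s)"
  define j where "j = (LEAST s. t \<le> s \<and> R s)"
  have i: "i \<le> t \<and> R i" unfolding i_def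
    by (rule GreatestI_nat[of _ 0 t]) (use assms(1) in auto)
  have j: "t \<le> j \<and> R j" "j \<le> l" unfolding j_def
    by (rule LeastI[of _ l], use assms(2,4) in simp, rule Least_le, use assms(2,4) in simp)
  have no_R: "\<not> R s" if "i < s" "s < j" for s
  proof
    assume "R s"
    show False
    proof (cases "s \<le> t")
      case True
      then have "s \<le> i" unfolding i_def using \<open>R s\<close> by (intro Greatest_le_nat[of _ s t]) auto
      then show False using that(1) by simp
    next
      case False
      then have "j \<le> s" unfolding j_def by (intro Least_le) (use \<open>R s\<close> in auto)
      then show False using that(2) by simp
    qed
  qed
  have "i < t" "t < j" using i j assms(3) by (auto simp: le_less)
  with i j no_R show thesis using that by blast
qed

lemma le_Suc_if_mult_le:
  fixes D b c :: nat
  assumes "0 < D" "D * c \<le> D * b + 1"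
  shows "c \<le> Suc b"
proof (rule ccontr)
  assume "\<not> c \<le> Suc b"
  then have "D * (b + 2) \<le> D * c" by (intro mult_le_mono2) simp
  then show False using assms by (simp add: algebra_simps)
qed

lemma reach_le_edges_mono: "E \<subseteq> E' \<Longrightarrow> reach_le E x y n \<Longrightarrow> reach_le E' x y n"
  by (rule reach_le_adj_mono) (auto simp: adj_def)

section \<open>Coarse images of cycles\<close>

text \<open>In the application \<open>x i = F (c\<^sub>i)\<close>, \<open>D = 4\<^sup>p\<close> and \<open>K = 4\<^sup>k\<close>.\<close>
locale coarse_cycle =
  fixes E :: "('a \<times> 'a) set" and x :: "nat \<Rightarrow> 'a" and P :: "nat \<Rightarrow> 'a list"
    and N D K :: nat
  assumes D_pos: "0 < D"
    and N_large: "4 * K + 2 \<le> N div 2"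
    and separated: "\<And>i j. i < N \<Longrightarrow> j < N \<Longrightarrow> D * cyc_dist N i j \<le> gdist E (x i) (x j)"
    and P_walk: "\<And>i. i < N \<Longrightarrow> walk E (P i)"
    and P_hd: "\<And>i. i < N \<Longrightarrow> hd (P i) = x i"
    and P_last: "\<And>i. i < N \<Longrightarrow> last (P i) = x (Suc i mod N)"
    and P_length: "\<And>i. i < N \<Longrightarrow> length (P i) \<le> K * D + 1"
begin

lemma reach_le_separated: "i < N \<Longrightarrow> j < N \<Longrightarrow> reach_le E (x i) (x j) n \<Longrightarrow> D * cyc_dist N i j \<le> n"
  by (rule le_trans[OF separated gdist_le_if_reach_le])

lemma P_length_ge_2:
  assumes i: "i < N"
  shows "2 \<le> length (P i)"
proof -
  have "D * cyc_dist N i (Suc i mod N) \<le> length (P i) - 1"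
    using separated[of i "Suc i mod N"] gdist_le_walk[OF P_walk[OF i]] P_hd[OF i] P_last[OF i] i
    by (metis le_trans mod_less_divisor zero_less_iff_neq_zero not_less0)
  then show ?thesis using cyc_dist_Suc_mod[of N i] i N_large D_pos by simp
qed

lemma adj_walks_edges_on_imp_adj: "I \<subseteq> {..<N} \<Longrightarrow> adj (walks_edges_on I P) y z \<Longrightarrow> adj E y z"
  by (rule adj_walks_edges_on[of _ _ P]) (use P_walk in auto)

lemma reach_le_along_P:
  assumes "i \<in> I" "i < N" "y \<in> set (P i)"
  shows "reach_le (walks_edges_on I P) (x i) y (K * D)"
proof -
  obtain r where r: "r < length (P i)" "P i ! r = y" using assms(3) by (auto simp: in_set_conv_nth)
  have "P i \<noteq> []" using r by auto
  then have "reach_le (walks_edges_on I P) (P i ! 0) (P i ! r) (r - 0)"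
    using reach_le_segment[OF walk_walks_edges_on[of i I P, OF assms(1) \<open>P i \<noteq> []\<close>], of 0 r] r by simp
  moreover have "P i ! 0 = x i" using P_hd[OF assms(2)] \<open>P i \<noteq> []\<close> by (simp add: hd_conv_nth)
  moreover have "r \<le> K * D" using P_length[OF assms(2)] r by simp
  ultimately show ?thesis using r by (auto intro: reach_le_mono)
qed

lemma reach_le_along_P_E:
  assumes "i < N" "y \<in> set (P i)"
  shows "reach_le E (x i) y (K * D)"
proof -
  have "reach_le (walks_edges_on {..<N} P) (x i) y (K * D)"
    using assms by (intro reach_le_along_P) auto
  then show ?thesis
    by (rule reach_le_adj_mono[rotated]) (rule adj_walks_edges_on_imp_adj[of "{..<N}"], auto)
qed

lemma reach_le_chain:
  "lo + d < N \<Longrightarrow> reach_le (walks_edges_on {lo..<lo + d} P) (x lo) (x (lo + d)) (d * (K * D))"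
proof (induction d)
  case 0
  show ?case by (simp add: reach_le_refl)
next
  case (Suc d)
  have "reach_le (walks_edges_on {lo..<lo + d} P) (x lo) (x (lo + d)) (d * (K * D))"
    using Suc by simp
  then have first: "reach_le (walks_edges_on {lo..<lo + Suc d} P) (x lo) (x (lo + d)) (d * (K * D))"
    by (rule reach_le_edges_mono[rotated]) (intro walks_edges_on_mono, auto)
  have "P (lo + d) \<noteq> []" using P_length_ge_2[of "lo + d"] Suc.prems by auto
  then have "reach_le (walks_edges_on {lo..<lo + Suc d} P) (x (lo + d)) (last (P (lo + d))) (K * D)"
    using Suc.prems by (intro reach_le_along_P) auto
  moreover have "last (P (lo + d)) = x (lo + Suc d)" using P_last[of "lo + d"] Suc.prems by simp
  ultimately have "reach_le (walks_edges_on {lo..<lo + Suc d} P) (x lo) (x (lo + Suc d)) (d * (K * D) + K * D)"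
    using reach_le_trans[OF first] by simp
  then show ?case by (simp add: add.commute)
qed

text \<open>The walks \<open>P cut\<close>, \<dots>, \<open>P (N - 1)\<close> form the back arcs.\<close>
definition cut :: nat where "cut = N - (2 * K + 1)"

definition back_verts :: "'a set" where "back_verts = (\<Union>v\<in>{cut..<N}. set (P v))"

lemma cut_less: "cut < N"
  using N_large by (simp add: cut_def)

lemma x_0_in_back_verts: "x 0 \<in> back_verts"
proof -
  have "N - 1 < N" "cut \<le> N - 1" using cut_less by auto
  moreover have "last (P (N - 1)) \<in> set (P (N - 1))"
    using P_length_ge_2[of "N - 1"] cut_less by (intro last_in_set) auto
  ultimately show ?thesis using P_last[of "N - 1"] unfolding back_verts_def by force
qed

lemma x_cut_in_back_verts: "x cut \<in> back_verts"
proof -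
  have "hd (P cut) \<in> set (P cut)"
    using P_length_ge_2[OF cut_less] by (intro hd_in_set) auto
  then show ?thesis using P_hd[OF cut_less] cut_less unfolding back_verts_def by force
qed

lemma Field_back_walks: "Field (walks_edges_on {cut..<N} P) \<subseteq> back_verts"
  unfolding back_verts_def by (rule Field_walks_edges_on)

lemma reach_le_back_verts:
  assumes "y \<in> back_verts"
  shows "reach_le (walks_edges_on {cut..<N} P) (x cut) y (N * (K * D))"
proof -
  obtain v where v: "cut \<le> v" "v < N" "y \<in> set (P v)" using assms unfolding back_verts_def by auto
  have "reach_le (walks_edges_on {cut..<cut + (v - cut)} P) (x cut) (x (cut + (v - cut))) ((v - cut) * (K * D))"
    using v by (intro reach_le_chain) simp
  moreover have "walks_edges_on {cut..<cut + (v - cut)} P \<subseteq> walks_edges_on {cut..<N} P"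
    using v by (intro walks_edges_on_mono) auto
  ultimately have "reach_le (walks_edges_on {cut..<N} P) (x cut) (x v) ((v - cut) * (K * D))"
    using v(1) by (simp add: reach_le_edges_mono)
  moreover have "reach_le (walks_edges_on {cut..<N} P) (x v) y (K * D)"
    using v by (intro reach_le_along_P) auto
  ultimately have "reach_le (walks_edges_on {cut..<N} P) (x cut) y ((v - cut) * (K * D) + K * D)"
    by (rule reach_le_trans)
  moreover have "(v - cut) * (K * D) + K * D \<le> N * (K * D)"
    using v by (metis add.commute mult_Suc mult_le_mono1 Suc_diff_le Suc_leI diff_le_self le_trans)
  ultimately show ?thesis by (rule reach_le_mono)
qed

lemma cycle_length_le: "cycle_in (walks_edges N P) ys \<Longrightarrow> length ys \<le> N * (K * D)"
proof -
  assume "cycle_in (walks_edges N P) ys"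
  then have "length ys \<le> (\<Sum>i<N. length (P i) - 1)"
  proof (rule cycle_in_walks_edges_length_le)
    fix i assume "i < N"
    then show "2 \<le> length (P i)" "last (P i) = hd (P (Suc i mod N))"
      using P_length_ge_2 P_last P_hd[of "Suc i mod N"] by simp_all
  qed
  also have "\<dots> \<le> (\<Sum>i<N. K * D)"
    using P_length by (intro sum_mono) (simp add: le_diff_conv)
  finally show ?thesis by simp
qed

end

lemma coarse_cycle_bilipschitz_image:
  fixes G :: "('a \<times> 'a) set" and H :: "('b \<times> 'b) set" and F :: "'a \<Rightarrow> 'b"
  assumes "0 < D" "4 * K + 2 \<le> length cs div 2"
    and lower: "\<forall>u \<in> verts G. \<forall>v \<in> verts G. D * gdist G u v \<le> gdist H (F u) (F v)"
    and upper: "\<forall>u \<in> verts G. \<forall>v \<in> verts G. gdist H (F u) (F v) \<le> K * D * gdist G u v"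
    and iso: "isometric_cycle G cs"
    and geodesics: "\<forall>i < length cs. walk H (P i) \<and> hd (P i) = F (cs ! i) \<and>
      last (P i) = F (cs ! ((i + 1) mod length cs)) \<and>
      length (P i) = Suc (gdist H (F (cs ! i)) (F (cs ! ((i + 1) mod length cs))))"
  shows "coarse_cycle H (\<lambda>i. F (cs ! i)) P (length cs) D K"
proof -
  have separated: "\<And>i j. i < length cs \<Longrightarrow> j < length cs \<Longrightarrow>
      D * cyc_dist (length cs) i j \<le> gdist H (F (cs ! i)) (F (cs ! j))"
    using lower isometric_cycle_nth_verts[OF iso] iso unfolding isometric_cycle_def by metis
  have "\<And>i. i < length cs \<Longrightarrow> gdist H (F (cs ! i)) (F (cs ! (Suc i mod length cs))) \<le> K * D"
    using upper isometric_cycle_nth_verts[OF iso] isometric_cycle_gdist_Suc[OF iso]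
    by (metis mod_less_divisor mult.right_neutral not_less_zero zero_less_iff_neq_zero)
  then show ?thesis
    unfolding coarse_cycle_def using assms(1,2) separated geodesics by auto
qed

locale coarse_cycle_track = coarse_cycle +
  fixes Q :: "'a list" and u :: "nat \<Rightarrow> nat"
  assumes Q_walk: "walk (walks_edges_on {..<cut} P) Q"
    and Q_hd: "hd Q = x 0" and Q_last: "last Q = x cut" and Q_distinct: "distinct Q"
    and u_less_cut: "\<And>t. t < length Q \<Longrightarrow> u t < cut"
    and Q_on_P: "\<And>t. t < length Q \<Longrightarrow> Q ! t \<in> set (P (u t))"
begin

lemma Q_ne: "Q \<noteq> []"
  using Q_walk by (simp add: walk_def)

lemma reach_le_in_Q:
  assumes "s < length Q" "t < length Q"
  shows "reach_le E (Q ! s) (Q ! t) (if s \<le> t then t - s else s - t)"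
proof -
  have "walk E Q"
    using Q_walk by (rule walk_adj_mono[rotated]) (rule adj_walks_edges_on_imp_adj, use cut_less in auto)
  then show ?thesis
    using assms reach_le_segment[of E Q s t] reach_le_segment[of E Q t s] by (auto intro: reach_le_sym)
qed

lemma reach_le_to_Q: "t < length Q \<Longrightarrow> reach_le E (x (u t)) (Q ! t) (K * D)"
  using reach_le_along_P_E Q_on_P u_less_cut cut_less by (meson less_trans)

lemma u_Suc_le:
  assumes t: "Suc t < length Q"
  shows "u (Suc t) \<le> u t + Suc (2 * K)"
proof -
  have "reach_le E (x (u t)) (x (u (Suc t))) (K * D + (Suc t - t) + K * D)"
    using t reach_le_trans[OF reach_le_trans[OF reach_le_to_Q[of t] reach_le_in_Q[of t "Suc t"]]
      reach_le_sym[OF reach_le_to_Q[of "Suc t"]]] by simp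
  then have "D * cyc_dist N (u t) (u (Suc t)) \<le> K * D + (Suc t - t) + K * D"
    by (rule reach_le_separated[rotated 2]) (use u_less_cut[of t] u_less_cut[of "Suc t"] cut_less t in auto)
  then have "D * cyc_dist N (u t) (u (Suc t)) \<le> D * (2 * K) + 1"
    by (simp add: algebra_simps)
  then have "cyc_dist N (u t) (u (Suc t)) \<le> Suc (2 * K)"
    by (rule le_Suc_if_mult_le[OF D_pos])
  then show ?thesis
    using u_less_cut[of t] u_less_cut[of "Suc t"] t unfolding cut_def
    by (auto simp: cyc_dist_def Let_def split: if_splits)
qed

lemma u_first: "u 0 \<le> K"
proof -
  have "reach_le E (x (u 0)) (x 0) (K * D)"
    using reach_le_to_Q[of 0] Q_hd Q_ne by (simp add: hd_conv_nth)
  then have "D * cyc_dist N (u 0) 0 \<le> K * D"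
    by (rule reach_le_separated[rotated 2]) (use u_less_cut[of 0] cut_less Q_ne in auto)
  then have "cyc_dist N (u 0) 0 \<le> K" using D_pos by (simp add: mult.commute)
  then show ?thesis
    using u_less_cut[of 0] Q_ne unfolding cut_def by (auto simp: cyc_dist_def Let_def min_def split: if_splits)
qed

lemma u_last: "cut \<le> u (length Q - 1) + K"
proof -
  have l: "length Q - 1 < length Q" using Q_ne by simp
  have "reach_le E (x (u (length Q - 1))) (x cut) (K * D)"
    using reach_le_to_Q[OF l] Q_last Q_ne by (simp add: last_conv_nth)
  then have "D * cyc_dist N (u (length Q - 1)) cut \<le> K * D"
    by (rule reach_le_separated[rotated 2]) (use u_less_cut[OF l] cut_less in auto)
  then have "cyc_dist N (u (length Q - 1)) cut \<le> K" using D_pos by (simp add: mult.commute)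
  then show ?thesis
    using u_less_cut[OF l] unfolding cut_def by (auto simp: cyc_dist_def Let_def min_def split: if_splits)
qed

lemma crossing_index:
  obtains t0 where "t0 < length Q" "N div 2 - 2 * K \<le> Suc (u t0)" "Suc (u t0) \<le> N div 2"
proof -
  have "u 0 < N div 2 - Suc (2 * K)" using u_first N_large by simp
  moreover have "N div 2 - Suc (2 * K) \<le> u (length Q - 1)"
    using u_last N_large unfolding cut_def by simp
  moreover have "\<And>t. t < length Q - 1 \<Longrightarrow> u (Suc t) \<le> u t + Suc (2 * K)"
    using u_Suc_le by simp
  ultimately obtain t where "t \<le> length Q - 1" "N div 2 - Suc (2 * K) \<le> u t"
    "u t \<le> N div 2 - Suc (2 * K) + 2 * K"
    by (rule nat_crossing)
  moreover have "t < length Q" using \<open>t \<le> length Q - 1\<close> Q_ne by (cases Q) auto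
  ultimately show thesis using N_large by (intro that[of t]) auto
qed

text \<open>\<open>Q ! t0\<close> lies within \<open>K D\<close> of \<open>x (u t0)\<close>, which is about half way round the cycle from
  every back arc; separation then keeps \<open>Q ! t0\<close> far from every vertex of the back arcs.\<close>
lemma far_from_crossing:
  assumes t0: "t0 < length Q" "N div 2 - 2 * K \<le> Suc (u t0)" "Suc (u t0) \<le> N div 2"
    and s: "s < length Q" "Q ! s \<in> back_verts"
  shows "D * (N div 2 - 2 * K) \<le> 2 * (K * D) + (if t0 \<le> s then s - t0 else t0 - s)"
proof -
  obtain v where v: "cut \<le> v" "v < N" "Q ! s \<in> set (P v)"
    using s(2) unfolding back_verts_def by auto
  have "reach_le E (x (u t0)) (x v) (K * D + (if t0 \<le> s then s - t0 else t0 - s) + K * D)"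
    using reach_le_trans[OF reach_le_trans[OF reach_le_to_Q[OF t0(1)] reach_le_in_Q[OF t0(1) s(1)]]
        reach_le_sym[OF reach_le_along_P_E[OF v(2,3)]]] .
  then have "D * cyc_dist N (u t0) v \<le> K * D + (if t0 \<le> s then s - t0 else t0 - s) + K * D"
    by (rule reach_le_separated[rotated 2]) (use u_less_cut[OF t0(1)] cut_less v in auto)
  moreover have "N div 2 - 2 * K \<le> cyc_dist N (u t0) v"
  proof -
    obtain h where h: "h = N div 2" "h + h \<le> N" by simp
    show ?thesis
      using t0 v u_less_cut[OF t0(1)] h(2) unfolding cut_def h(1)[symmetric]
      by (auto simp: cyc_dist_def Let_def min_def)
  qed
  then have "D * (N div 2 - 2 * K) \<le> D * cyc_dist N (u t0) v" by (rule mult_le_mono2)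
  ultimately show ?thesis by linarith
qed

lemma back_excursion:
  obtains i j where "Suc i < j" "j < length Q" "Q ! i \<in> back_verts" "Q ! j \<in> back_verts"
    "\<And>s. i < s \<Longrightarrow> s < j \<Longrightarrow> Q ! s \<notin> back_verts" "2 * D * (N div 2 - 4 * K) < Suc (j - i)"
proof -
  obtain t0 where t0: "t0 < length Q" "N div 2 - 2 * K \<le> Suc (u t0)" "Suc (u t0) \<le> N div 2"
    by (rule crossing_index)
  obtain r where "N div 2 = 4 * K + r" using N_large nat_le_iff_add by (meson add_leD1)
  then have split: "D * (N div 2 - 2 * K) = D * (N div 2 - 4 * K) + 2 * (K * D)"
    by (simp add: algebra_simps)
  have R0: "Q ! 0 \<in> back_verts" using Q_hd Q_ne x_0_in_back_verts by (simp add: hd_conv_nth)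
  have Rl: "Q ! (length Q - 1) \<in> back_verts"
    using Q_last Q_ne x_cut_in_back_verts by (simp add: last_conv_nth)
  have Rt0: "Q ! t0 \<notin> back_verts"
  proof
    assume "Q ! t0 \<in> back_verts"
    then have "D * (N div 2 - 2 * K) \<le> 2 * (K * D)" using far_from_crossing[OF t0 t0(1)] by simp
    then have "D * (N div 2 - 4 * K) = 0" using split by linarith
    then show False using D_pos N_large by simp
  qed
  have "t0 \<le> length Q - 1" using t0(1) by simp
  then obtain i j where ij: "i < t0" "t0 < j" "j \<le> length Q - 1" "Q ! i \<in> back_verts"
    "Q ! j \<in> back_verts" "\<And>s. i < s \<Longrightarrow> s < j \<Longrightarrow> Q ! s \<notin> back_verts"
    using nat_excursion[of "\<lambda>s. Q ! s \<in> back_verts", OF R0 Rl Rt0] by blast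
  have "D * (N div 2 - 2 * K) \<le> 2 * (K * D) + (t0 - i)"
    using far_from_crossing[OF t0, of i] ij t0(1) by simp
  moreover have "D * (N div 2 - 2 * K) \<le> 2 * (K * D) + (j - t0)"
    using far_from_crossing[OF t0, of j] ij Q_ne by simp
  ultimately have "2 * D * (N div 2 - 4 * K) < Suc (j - i)" using split ij(1,2) by linarith
  moreover have "j < length Q" using ij(3) Q_ne by (cases Q) auto
  ultimately show thesis using ij by (intro that[of i j]) auto
qed

lemma long_cycle:
  obtains ys where "cycle_in (walks_edges N P) ys" "2 * D * (N div 2 - 4 * K) < length ys"
proof -
  obtain i j where ij: "Suc i < j" "j < length Q" "Q ! i \<in> back_verts" "Q ! j \<in> back_verts"
    "\<And>s. i < s \<Longrightarrow> s < j \<Longrightarrow> Q ! s \<notin> back_verts" "2 * D * (N div 2 - 4 * K) < Suc (j - i)"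
    by (fact back_excursion)
  define A where "A = take (Suc (j - i)) (drop i Q)"
  have A: "walk (walks_edges_on {..<cut} P) A" "hd A = Q ! i" "last A = Q ! j" "length A = Suc (j - i)"
    "\<And>r. r < length A \<Longrightarrow> A ! r = Q ! (i + r)"
    unfolding A_def using walk_segment[OF Q_walk _ ij(2), of i] ij(1) by simp_all
  obtain S where S: "walk (walks_edges_on {cut..<N} P) S" "hd S = Q ! j" "last S = Q ! i" "distinct S"
    using reach_le_trans[OF reach_le_sym[OF reach_le_back_verts[OF ij(4)]] reach_le_back_verts[OF ij(3)]]
    by (rule reach_le_distinct_walk)
  have "Q ! j \<noteq> Q ! i" using Q_distinct ij(1,2) by (simp add: nth_eq_iff_index_eq)
  then have S_len: "2 \<le> length S" using S(1-3) by (cases S; cases "tl S") (auto simp: walk_def)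
  have S_back: "set S \<subseteq> back_verts" using walk_set_subset_Field[OF S(1) S_len] Field_back_walks by blast
  have meet: "\<forall>y \<in> set A. y \<in> set S \<longrightarrow> y = hd A \<or> y = last A"
  proof (intro ballI impI)
    fix y assume "y \<in> set A" "y \<in> set S"
    then obtain r where r: "r < length A" "y = Q ! (i + r)" using A(5) by (auto simp: in_set_conv_nth)
    then have "\<not> (i < i + r \<and> i + r < j)" using ij(5) S_back \<open>y \<in> set S\<close> by blast
    then have "r = 0 \<or> i + r = j" using r(1) A(4) by linarith
    then show "y = hd A \<or> y = last A" using r A(2,3) by auto
  qed
  have "walks_edges_on {..<cut} P \<subseteq> walks_edges N P" "walks_edges_on {cut..<N} P \<subseteq> walks_edges N P"
    unfolding walks_edges_eq_on using cut_less by (intro walks_edges_on_mono; auto)+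
  then have "walk (walks_edges N P) A" "walk (walks_edges N P) S"
    using walk_mono A(1) S(1) by blast+
  moreover have "distinct A" using Q_distinct by (simp add: A_def)
  ultimately have "cycle_in (walks_edges N P) (A @ butlast (tl S))"
    using A S S_len meet ij(1) by (intro cycle_in_join) auto
  moreover have "2 * D * (N div 2 - 4 * K) < length (A @ butlast (tl S))" using A(4) ij(6) by simp
  ultimately show thesis by (rule that)
qed

end

context coarse_cycle
begin

theorem cycle_between:
  obtains ys where "cycle_in (walks_edges N P) ys"
    "2 * D * (N div 2 - 4 * K) < length ys" "length ys \<le> N * (K * D)"
proof -
  have "reach_le (walks_edges_on {0..<0 + cut} P) (x 0) (x (0 + cut)) (cut * (K * D))"
    using cut_less by (intro reach_le_chain) simp
  then have "reach_le (walks_edges_on {..<cut} P) (x 0) (x cut) (cut * (K * D))"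
    by (simp add: atLeast0LessThan)
  then obtain Q where Q: "walk (walks_edges_on {..<cut} P) Q" "hd Q = x 0" "last Q = x cut" "distinct Q"
    by (rule reach_le_distinct_walk)
  have "\<exists>i. i < cut \<and> Q ! t \<in> set (P i)" if t: "t < length Q" for t
  proof (cases "2 \<le> length Q")
    case True
    then have "Q ! t \<in> Field (walks_edges_on {..<cut} P)"
      using walk_set_subset_Field[OF Q(1) True] nth_mem[OF t] by blast
    then show ?thesis using Field_walks_edges_on[of "{..<cut}" P] by blast
  next
    case False
    then have "t = 0" using t by simp
    then have "Q ! t = x 0" using t Q(2) by (metis hd_conv_nth less_nat_zero_code list.size(3))
    moreover have "P 0 \<noteq> []" using P_length_ge_2[of 0] cut_less by auto
    then have "x 0 \<in> set (P 0)" using P_hd[of 0] cut_less hd_in_set[of "P 0"] by simp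
    moreover have "0 < cut" using N_large by (simp add: cut_def)
    ultimately show ?thesis by (intro exI[of _ 0]) simp
  qed
  then obtain u where u: "\<And>t. t < length Q \<Longrightarrow> u t < cut \<and> Q ! t \<in> set (P (u t))"
    by (metis (lifting))
  have "coarse_cycle_track E x P N D K Q u"
    by (intro coarse_cycle_track.intro coarse_cycle_axioms coarse_cycle_track_axioms.intro)
      (use Q u in simp_all)
  then obtain ys where "cycle_in (walks_edges N P) ys" "2 * D * (N div 2 - 4 * K) < length ys"
    by (rule coarse_cycle_track.long_cycle)
  then show thesis using cycle_length_le by (intro that) simp_all
qed

end

lemma four_pow_pred_ge:
  assumes "(4::real) ^ h / 3 - 1 - 4 ^ k \<ge> 4 ^ (h - 1)" "1 \<le> h"
  shows "3 * 4 ^ k + 3 \<le> (4::nat) ^ (h - 1)"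
proof -
  have "(4::real) ^ h = 4 * 4 ^ (h - 1)" using assms(2) by (simp flip: power_Suc)
  then have "real (3 * 4 ^ k + 3) \<le> real ((4::nat) ^ (h - 1))" using assms(1) by simp
  then show ?thesis by (rule of_nat_le_iff[THEN iffD1])
qed

theorem claim2p5:
  fixes n m k p h :: nat and F :: "vert \<Rightarrow> vert"
    and cs :: "vert list" and P :: "nat \<Rightarrow> vert list"
  assumes "n \<ge> 1" and "m \<ge> 1" and "k \<ge> 1"
    and F_maps: "F ` verts (laakso n) \<subseteq> verts (diamond m)"
    and F_lower: "\<forall>u \<in> verts (laakso n). \<forall>v \<in> verts (laakso n).
        4 ^ p * gdist (laakso n) u v \<le> gdist (diamond m) (F u) (F v)"
    and F_upper: "\<forall>u \<in> verts (laakso n). \<forall>v \<in> verts (laakso n).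
        gdist (diamond m) (F u) (F v) \<le> 4 ^ k * 4 ^ p * gdist (laakso n) u v"
    and h_range: "1 \<le> h" "h \<le> n"
    and h_cond: "(4::real) ^ h / 3 - 1 - 4 ^ k \<ge> 4 ^ (h - 1)"
    and C_iso: "isometric_cycle (laakso n) cs" and C_len: "length cs = 4 ^ h"
    and P_paths: "\<forall>i < length cs. walk (diamond m) (P i) \<and>
        hd (P i) = F (cs ! i) \<and> last (P i) = F (cs ! ((i + 1) mod length cs)) \<and>
        length (P i) = Suc (gdist (diamond m) (F (cs ! i)) (F (cs ! ((i + 1) mod length cs))))"
  shows "\<exists>ys. cycle_in (walks_edges (length cs) P) ys \<and>
           4 ^ (p + h - 1) \<le> length ys \<and> length ys \<le> 4 ^ (p + h + k)"
proof -
  define N4 where "N4 = (4::nat) ^ (h - 1)"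
  have N: "length cs = 4 * N4" using C_len h_range(1) unfolding N4_def by (simp flip: power_Suc)
  have N4: "3 * 4 ^ k + 3 \<le> N4" unfolding N4_def by (rule four_pow_pred_ge[OF h_cond h_range(1)])
  have "4 * 4 ^ k + 2 \<le> length cs div 2" using N N4 by simp
  then have "coarse_cycle (diamond m) (\<lambda>i. F (cs ! i)) P (length cs) (4 ^ p) (4 ^ k)"
    by (intro coarse_cycle_bilipschitz_image[OF _ _ F_lower F_upper C_iso P_paths]) simp_all
  then obtain ys where ys: "cycle_in (walks_edges (length cs) P) ys"
    "2 * 4 ^ p * (length cs div 2 - 4 * 4 ^ k) < length ys" "length ys \<le> length cs * (4 ^ k * 4 ^ p)"
    by (rule coarse_cycle.cycle_between)
  have "p + h - 1 = p + (h - 1)" using h_range(1) by simp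
  then have "(4::nat) ^ (p + h - 1) = 4 ^ p * N4" by (simp add: N4_def power_add)
  also have "\<dots> \<le> 4 ^ p * (2 * (length cs div 2 - 4 * 4 ^ k))"
    using N N4 by (intro mult_le_mono2) simp
  also have "\<dots> = 2 * 4 ^ p * (length cs div 2 - 4 * 4 ^ k)" by (simp only: mult.left_commute mult.assoc)
  finally have "4 ^ (p + h - 1) \<le> length ys" using ys(2) by linarith
  moreover have "length cs * (4 ^ k * 4 ^ p) = (4::nat) ^ (p + h + k)"
    using C_len by (simp add: power_add)
  ultimately show ?thesis using ys(1,3) by auto
qed

end
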